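(* Let $k\ge2$ be the cache size, let $1\le r\le k-1$ and $N=k+r$, with the pages being the vertices $1,2,\dots,N$ of the cycle $C_N$ in cyclic order. Let $x=\lfloor\log_2\frac Nr\rfloor$ and $X_r=r(x-1)+\lceil N/2^x\rceil$. For $n\ge1$ let $I_n=\langle 1,2,\dots,N\rangle^n$ (the sequence $1,2,\dots,N$ repeated $n$ times). When FAR (with respect to $C_N$) serves $I_n$, each $k$-phase except the first and possibly the last contains exactly $X_r$ faults, and \[\left\lfloor\frac{nN}{k}\right\rfloor X_r+k-X_r\le\mathrm{FAR}(I_n)\le\left\lfloor\frac{nN}{k}\right\rfloor X_r+k-1.\]
   Context: Paging: a cache holds at most $k$ pages and is initially empty. A request to a page in the cache is a hit; otherwise it is a fault, the page is brought into the cache, evicting a page first if the cache is full. $\mathrm{FAR}(I)$ is the number of faults of FAR on $I$. FAR (relative to the access graph): each requested page is marked; on a fault with a full cache, if all cached pages are marked it first unmarks all pages; it then evicts the unmarked cached page whose graph distance to the nearest marked page is largest, ties broken by evicting the least recently requested. $k$-phases: a request sequence is divided recursively: phase 0 is empty (and is ignored), and for $i\ge1$ phase $i$ is a maximal sequence following phase $i-1$ containing at most $k$ distinct pages. *)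

theory Defs
  imports Complex_Main
begin

(* Pages are natural numbers; the access graph is the cycle C_N on the vertices 1..N
   in cyclic order. Graph distance on C_N: *)
definition cyc_dist :: "nat \<Rightarrow> nat \<Rightarrow> nat \<Rightarrow> nat" where
  "cyc_dist N a b = (let d = (if a \<le> b then b - a else a - b) in min d (N - d))"

definition dist_marked :: "nat \<Rightarrow> nat set \<Rightarrow> nat \<Rightarrow> nat" where
  "dist_marked N M q = Min ((\<lambda>m. cyc_dist N q m) ` M)"

(* FAR state: (cache, marked pages, time of last request of each page, current time) *)
type_synonym far_state = "nat set \<times> nat set \<times> (nat \<Rightarrow> nat) \<times> nat"

definition far_victim :: "nat \<Rightarrow> nat set \<Rightarrow> nat set \<Rightarrow> (nat \<Rightarrow> nat) \<Rightarrow> nat" where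
  "far_victim N C M L = (SOME v. v \<in> C - M \<and>
      (\<forall>u \<in> C - M. dist_marked N M u < dist_marked N M v
                   \<or> (dist_marked N M u = dist_marked N M v \<and> L v \<le> L u)))"

definition far_step :: "nat \<Rightarrow> nat \<Rightarrow> far_state \<Rightarrow> nat \<Rightarrow> far_state \<times> bool" where
  "far_step k N s p = (case s of (C, M, L, t) \<Rightarrow>
     if p \<in> C then ((C, insert p M, L(p := t), Suc t), False)
     else if card C < k then ((insert p C, insert p M, L(p := t), Suc t), True)
     else (let M0 = (if C \<subseteq> M then {} else M);
               M1 = insert p M0;
               v = far_victim N C M1 L
           in ((insert p (C - {v}), M1, L(p := t), Suc t), True)))"

fun far_run :: "nat \<Rightarrow> nat \<Rightarrow> far_state \<Rightarrow> nat list \<Rightarrow> bool list" where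
  "far_run k N s [] = []"
| "far_run k N s (p # ps) = (let (s', f) = far_step k N s p in f # far_run k N s' ps)"

definition far_init :: far_state where
  "far_init = ({}, {}, (\<lambda>_. 0), 0)"

definition far_faults :: "nat \<Rightarrow> nat \<Rightarrow> nat list \<Rightarrow> bool list" where
  "far_faults k N I = far_run k N far_init I"

definition FAR :: "nat \<Rightarrow> nat \<Rightarrow> nat list \<Rightarrow> nat" where
  "FAR k N I = length (filter id (far_faults k N I))"

(* k-phases: greedy split into maximal consecutive blocks with at most k distinct pages *)
fun split_phases :: "nat \<Rightarrow> 'a list \<Rightarrow> 'a list \<Rightarrow> 'a list list" where
  "split_phases k cur [] = (if cur = [] then [] else [cur])"
| "split_phases k cur (x # xs) =
     (if card (set (x # cur)) \<le> k then split_phases k (cur @ [x]) xs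
      else cur # split_phases k [x] xs)"

definition k_phases :: "nat \<Rightarrow> 'a list \<Rightarrow> 'a list list" where
  "k_phases k I = split_phases k [] I"

fun chop_by :: "nat list \<Rightarrow> 'b list \<Rightarrow> 'b list list" where
  "chop_by [] ys = []"
| "chop_by (l # ls) ys = take l ys # chop_by ls (drop l ys)"

definition phase_faults :: "nat \<Rightarrow> nat \<Rightarrow> nat list \<Rightarrow> nat list" where
  "phase_faults k N I =
     map (\<lambda>c. length (filter id c)) (chop_by (map length (k_phases k I)) (far_faults k N I))"

end

theory Submission
  imports Defs
begin

text \<open>Label the pages of a phase by their offset from the phase's first request. Since the
request sequence is \<open>N\<close>-periodic and \<open>k < N\<close>, every phase after the first requests the
offsets \<open>0, \<dots>, k - 1\<close>, and at its start the cache misses exactly the offsets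
\<open>0, \<dots>, r - 1\<close>. After the request at offset \<open>j\<close> the marked pages are the offsets
\<open>0, \<dots>, j\<close>, so FAR evicts the unmarked offset farthest from both \<open>j\<close> and \<open>N\<close>, i.e. the
midpoint of the unmarked arc. The missing offsets therefore form a block of \<open>r\<close> consecutive
offsets that jumps, fault by fault, from \<open>N - \<lceil>N/2\<^sup>i\<rceil>\<close> to \<open>N - \<lceil>N/2\<^sup>i\<^sup>+\<^sup>1\<rceil>\<close>, with no
faults in between; after \<open>x = \<lfloor>log\<^sub>2 (N/r)\<rfloor>\<close> halvings the block reaches the end of the
phase and every remaining request faults. This gives \<open>r (x - 1) + \<lceil>N/2\<^sup>x\<rceil>\<close> faults per
phase, \<open>k\<close> in the first phase and fewer in a final partial phase.\<close>

section \<open>Halving and the binary logarithm\<close>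

lemma floor_log2_ratio_bounds:
  fixes N r :: nat
  assumes "0 < r" "r \<le> N"
  defines "x \<equiv> nat \<lfloor>log 2 (real N / real r)\<rfloor>"
  shows "r * 2 ^ x \<le> N \<and> N < r * 2 ^ Suc x"
proof -
  have pos: "0 < real N / real r" using assms by simp
  have "1 \<le> real N / real r" using assms by simp
  then have "\<lfloor>log 2 (real N / real r)\<rfloor> = int x" unfolding x_def by simp
  then have "2 powr real x \<le> real N / real r \<and> real N / real r < 2 powr (real x + 1)"
    using floor_log_eq_powr_iff[OF pos, of 2 "int x"] by simp
  moreover have "2 powr (real x + 1) = (2::real) ^ Suc x" by (simp add: powr_add powr_realpow)
  ultimately have "2 ^ x \<le> real N / real r \<and> real N / real r < 2 ^ Suc x"
    by (simp add: powr_realpow)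
  then have "real (r * 2 ^ x) \<le> real N \<and> real N < real (r * 2 ^ Suc x)"
    using assms(1) by (simp add: field_simps del: power_Suc)
  then show ?thesis by linarith
qed

fun halving :: "nat \<Rightarrow> nat \<Rightarrow> nat" where
  "halving N 0 = N"
| "halving N (Suc i) = (halving N i + 1) div 2"

lemma halving_bounds: "0 < N \<Longrightarrow> N \<le> halving N i * 2 ^ i \<and> (halving N i - 1) * 2 ^ i < N"
proof (induction i)
  case 0 then show ?case by simp
next
  case (Suc i)
  let ?d = "halving N i"
  have IH: "N \<le> ?d * 2 ^ i" "(?d - 1) * 2 ^ i < N" using Suc by auto
  have "?d * 2 ^ i \<le> (2 * ((?d + 1) div 2)) * 2 ^ i" by (intro mult_right_mono) linarith+
  moreover have "(2 * ((?d + 1) div 2 - 1)) * 2 ^ i \<le> (?d - 1) * 2 ^ i" by (intro mult_right_mono) linarith+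
  moreover have "halving N (Suc i) * 2 ^ Suc i = (2 * ((?d + 1) div 2)) * 2 ^ i"
    "(halving N (Suc i) - 1) * 2 ^ Suc i = (2 * ((?d + 1) div 2 - 1)) * 2 ^ i" by simp_all
  ultimately show ?case using IH by linarith
qed

lemma halving_eq_ceiling:
  assumes "0 < N" shows "halving N i = nat \<lceil>real N / 2 ^ i\<rceil>"
proof -
  have b: "N \<le> halving N i * 2 ^ i" "(halving N i - 1) * 2 ^ i < N"
    using halving_bounds[OF assms] by auto
  then have "1 \<le> halving N i" using assms by (cases "halving N i") auto
  moreover have "real N \<le> real (halving N i * 2 ^ i)" "real ((halving N i - 1) * 2 ^ i) < real N"
    using b by (simp_all only: of_nat_le_iff of_nat_less_iff)
  ultimately have "real (halving N i) - 1 < real N / 2 ^ i" "real N / 2 ^ i \<le> real (halving N i)"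
    by (simp_all add: of_nat_diff divide_le_eq less_divide_eq)
  then have "\<lceil>real N / 2 ^ i\<rceil> = int (halving N i)" by (simp add: ceiling_eq_iff)
  then show ?thesis by simp
qed

lemma halving_le: "halving N i \<le> N"
  by (induction i) auto

section \<open>The eviction rule on offsets\<close>

text \<open>Offsets \<open>0, \<dots>, N - 1\<close> of a phase: when offset \<open>j\<close> is requested, the marked offsets are
\<open>0, \<dots>, j\<close>, so an offset \<open>u > j\<close> is at cycle distance \<open>mark_dist N j u\<close> from the marked set.
\<open>holes N r j\<close> is the set of offsets missing from the cache when offset \<open>j\<close> is requested, and
the tie-break \<open>v \<le> u\<close> prefers offsets requested longer ago.\<close>

definition mark_dist :: "nat \<Rightarrow> nat \<Rightarrow> nat \<Rightarrow> nat" where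
  "mark_dist N j u = min (u - j) (N - u)"

definition evictable :: "nat \<Rightarrow> nat \<Rightarrow> nat set \<Rightarrow> nat set" where
  "evictable N j H = {j<..<N} - H"

definition is_victim :: "nat \<Rightarrow> nat \<Rightarrow> nat set \<Rightarrow> nat \<Rightarrow> bool" where
  "is_victim N j H v \<longleftrightarrow> v \<in> evictable N j H \<and>
     (\<forall>u \<in> evictable N j H. mark_dist N j u < mark_dist N j v
        \<or> (mark_dist N j u = mark_dist N j v \<and> v \<le> u))"

definition victim :: "nat \<Rightarrow> nat \<Rightarrow> nat set \<Rightarrow> nat" where
  "victim N j H = (THE v. is_victim N j H v)"

lemma is_victim_unique:
  assumes "is_victim N j H v" "is_victim N j H w" shows "v = w"
proof -
  have "mark_dist N j w < mark_dist N j v \<or> (mark_dist N j w = mark_dist N j v \<and> v \<le> w)"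
    "mark_dist N j v < mark_dist N j w \<or> (mark_dist N j v = mark_dist N j w \<and> w \<le> v)"
    using assms unfolding is_victim_def by blast+
  then show ?thesis by linarith
qed

lemma is_victim_exists:
  assumes "evictable N j H \<noteq> {}"
  shows "\<exists>v. is_victim N j H v"
proof -
  let ?E = "evictable N j H"
  have fin: "finite ?E" unfolding evictable_def by auto
  define m where "m = Max (mark_dist N j ` ?E)"
  define T where "T = {u \<in> ?E. mark_dist N j u = m}"
  have "m \<in> mark_dist N j ` ?E" unfolding m_def using fin assms by (intro Max_in) auto
  then have "T \<noteq> {}" "finite T" unfolding T_def using fin by auto
  then have vT: "Min T \<in> T" by (rule Min_in[rotated])
  have "is_victim N j H (Min T)"
    unfolding is_victim_def
  proof (intro conjI ballI)
    show "Min T \<in> ?E" using vT by (simp add: T_def)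
    fix u assume u: "u \<in> ?E"
    have "mark_dist N j u \<le> m" unfolding m_def using fin u by (intro Max_ge) auto
    moreover have "mark_dist N j u = m \<Longrightarrow> Min T \<le> u" using \<open>finite T\<close> u by (intro Min_le) (auto simp: T_def)
    ultimately show "mark_dist N j u < mark_dist N j (Min T)
        \<or> (mark_dist N j u = mark_dist N j (Min T) \<and> Min T \<le> u)"
      using vT by (auto simp: T_def)
  qed
  then show ?thesis by blast
qed

lemma victim_eq: "is_victim N j H v \<Longrightarrow> victim N j H = v"
  unfolding victim_def using is_victim_unique by blast

lemma is_victim_victim: "evictable N j H \<noteq> {} \<Longrightarrow> is_victim N j H (victim N j H)"
  using is_victim_exists victim_eq by metis

lemma evictable_nonempty:
  assumes "finite H" "j \<in> H" "card H < N - j"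
  shows "evictable N j H \<noteq> {}"
proof
  assume "evictable N j H = {}"
  then have "{j<..<N} \<subseteq> H - {j}" unfolding evictable_def by auto
  then have "card {j<..<N} \<le> card (H - {j})" using assms(1) by (intro card_mono) auto
  moreover have "card H > 0" using assms(1,2) card_gt_0_iff by blast
  ultimately show False using assms by simp
qed

fun holes :: "nat \<Rightarrow> nat \<Rightarrow> nat \<Rightarrow> nat set" where
  "holes N r 0 = {..<r}"
| "holes N r (Suc j) =
     (if j \<in> holes N r j then insert (victim N j (holes N r j)) (holes N r j - {j})
      else holes N r j)"

fun faults_before :: "nat \<Rightarrow> nat \<Rightarrow> nat \<Rightarrow> nat" where
  "faults_before N r 0 = 0"
| "faults_before N r (Suc j) = faults_before N r j + (if j \<in> holes N r j then 1 else 0)"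

lemma faults_before_mono: "j \<le> j' \<Longrightarrow> faults_before N r j \<le> faults_before N r j'"
  by (induction j') (auto simp: le_Suc_eq)

lemma holes_invariant:
  assumes "r < N" "j \<le> N - r"
  shows "holes N r j \<subseteq> {j..<N} \<and> finite (holes N r j) \<and> card (holes N r j) = r"
  using assms(2)
proof (induction j)
  case 0
  then show ?case using assms(1) by auto
next
  case (Suc j)
  let ?H = "holes N r j"
  have IH: "?H \<subseteq> {j..<N}" "finite ?H" "card ?H = r" using Suc by auto
  show ?case
  proof (cases "j \<in> ?H")
    case False
    then show ?thesis using IH by (auto simp: subset_iff Suc_le_eq order.order_iff_strict)
  next
    case True
    have "evictable N j ?H \<noteq> {}" using IH Suc.prems True by (intro evictable_nonempty) auto
    then have "victim N j ?H \<in> {j<..<N} - ?H"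
      using is_victim_victim unfolding is_victim_def evictable_def by blast
    moreover have "r \<ge> 1" using IH True card_gt_0_iff[of ?H] by force
    ultimately show ?thesis using IH True by (auto simp: card_insert_if)
  qed
qed

text \<open>With \<open>D = \<lceil>N/2\<^sup>i\<rceil>\<close>, the unmarked arc seen from the current request \<open>N - D + t\<close>
ends at \<open>N\<close>; its midpoint, rounded towards \<open>N\<close>, is \<open>N - \<lceil>D/2\<rceil> + t\<close>.\<close>

lemma midpoint_is_farthest:
  fixes N D D' r t u :: nat
  assumes "2 * r \<le> D" "D \<le> N" "t < r" "D' = (D + 1) div 2"
    and "N - D + r \<le> u" "u < N" "u < N - D' \<or> N - D' + t \<le> u"
  shows "mark_dist N (N - D + t) u < mark_dist N (N - D + t) (N - D' + t)
     \<or> (mark_dist N (N - D + t) u = mark_dist N (N - D + t) (N - D' + t) \<and> N - D' + t \<le> u)"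
proof -
  have D': "2 * D' = D + 1 \<or> 2 * D' = D" using assms(4) by linarith
  have Dr: "r \<le> D'" using D' assms(1) by linarith
  have "N - D' + t - (N - D + t) = D - D'" using D' assms(2) by linarith
  moreover have "N - (N - D' + t) = D' - t" using D' assms(2,3) Dr by linarith
  ultimately have v: "mark_dist N (N - D + t) (N - D' + t) = min (D - D') (D' - t)"
    unfolding mark_dist_def by simp
  have u: "mark_dist N (N - D + t) u = min (u - (N - D + t)) (N - u)"
    unfolding mark_dist_def ..
  consider "u < N - D'" | "u = N - D' + t" | "N - D' + t < u" using assms(7) by linarith
  then show ?thesis
  proof cases
    case 1
    then have "u - (N - D + t) < D - D'" using assms(2,3,5) D' by linarith
    moreover have "u - (N - D + t) < D' - t" using 1 assms(2,3) D' Dr by linarith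
    ultimately show ?thesis unfolding u v by (simp add: min.strict_coboundedI1)
  next
    case 2
    then have "u - (N - D + t) = D - D'" "N - u = D' - t" using D' assms(2,3) Dr by linarith+
    then show ?thesis unfolding u v using 2 by simp
  next
    case 3
    then have "N - u < D' - t" using assms(6) by linarith
    moreover have "D' - t \<le> D - D' + 1" using D' by linarith
    ultimately have "min (u - (N - D + t)) (N - u) < min (D - D') (D' - t)
                     \<or> min (u - (N - D + t)) (N - u) = min (D - D') (D' - t)" by linarith
    then show ?thesis unfolding u v using 3 by auto
  qed
qed

lemma far_victim_eq:
  assumes v: "is_victim N j H v" and img: "C - M = f ` evictable N j H"
    and dist: "\<And>q. q \<in> evictable N j H \<Longrightarrow> dist_marked N M (f q) = mark_dist N j q"
    and age: "\<And>q q'. q \<in> evictable N j H \<Longrightarrow> q' \<in> evictable N j H \<Longrightarrow> L (f q) \<le> L (f q') \<longleftrightarrow> q \<le> q'"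
  shows "far_victim N C M L = f v"
proof -
  let ?E = "evictable N j H" and ?d = "dist_marked N M"
  let ?Q = "\<lambda>w. w \<in> C - M \<and> (\<forall>u \<in> C - M. ?d u < ?d w \<or> (?d u = ?d w \<and> L w \<le> L u))"
  have vE: "v \<in> ?E" using v by (simp add: is_victim_def)
  have "?Q (f v)"
  proof (intro conjI ballI)
    show "f v \<in> C - M" using vE img by blast
    fix w assume "w \<in> C - M"
    then obtain u where u: "u \<in> ?E" "w = f u" using img by auto
    then show "?d w < ?d (f v) \<or> (?d w = ?d (f v) \<and> L (f v) \<le> L w)"
      using v dist[OF u(1)] dist[OF vE] age[OF vE u(1)] unfolding is_victim_def by auto
  qed
  moreover have "w = f v" if w: "?Q w" for w
  proof -
    obtain q where q: "q \<in> ?E" "w = f q" using w img by auto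
    have "is_victim N j H q" unfolding is_victim_def
    proof (intro conjI ballI q(1))
      fix u assume u: "u \<in> ?E"
      then have "?d (f u) < ?d w \<or> (?d (f u) = ?d w \<and> L w \<le> L (f u))" using w img by blast
      then show "mark_dist N j u < mark_dist N j q \<or> (mark_dist N j u = mark_dist N j q \<and> q \<le> u)"
        using dist[OF u] dist[OF q(1)] age[OF q(1) u] q(2) by auto
    qed
    then show ?thesis using is_victim_unique[OF _ v] q(2) by simp
  qed
  ultimately show ?thesis unfolding far_victim_def by (rule some_equality)
qed

section \<open>Phases of sequences without short repetitions\<close>

lemma concat_replicate_nth:
  "i < n * length xs \<Longrightarrow> concat (replicate n xs) ! i = xs ! (i mod length xs)"
proof (induction n arbitrary: i)
  case (Suc n)
  show ?case
  proof (cases "i < length xs")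
    case False
    then have "concat (replicate n xs) ! (i - length xs) = xs ! (i mod length xs)"
      using Suc by (simp add: le_mod_geq)
    then show ?thesis using False by (simp add: nth_append)
  qed (simp add: nth_append)
qed simp

lemma concat_replicate_upt:
  "0 < N \<Longrightarrow> concat (replicate n [1..<N + 1]) = map (\<lambda>T. T mod N + 1) [0..<n * N]"
  by (rule nth_equalityI)
     (simp_all add: length_concat sum_list_replicate concat_replicate_nth del: upt_Suc)

definition window_distinct :: "nat \<Rightarrow> 'a list \<Rightarrow> bool" where
  "window_distinct k ys \<longleftrightarrow> (\<forall>i j. i < j \<longrightarrow> j < length ys \<longrightarrow> j \<le> i + k \<longrightarrow> ys ! i \<noteq> ys ! j)"

lemma window_distinct_drop: "window_distinct k ys \<Longrightarrow> window_distinct k (drop m ys)"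
  unfolding window_distinct_def
proof (intro allI impI)
  fix i j assume w: "\<forall>i j. i < j \<longrightarrow> j < length ys \<longrightarrow> j \<le> i + k \<longrightarrow> ys ! i \<noteq> ys ! j"
    and ij: "i < j" "j < length (drop m ys)" "j \<le> i + k"
  have "ys ! (m + i) \<noteq> ys ! (m + j)" using w ij by simp
  then show "drop m ys ! i \<noteq> drop m ys ! j" using ij by simp
qed

lemma window_distinct_take: "window_distinct k ys \<Longrightarrow> m \<le> k + 1 \<Longrightarrow> distinct (take m ys)"
  unfolding distinct_conv_nth
proof (intro allI impI)
  fix i j assume w: "window_distinct k ys" and m: "m \<le> k + 1"
    and ij: "i < length (take m ys)" "j < length (take m ys)" "i \<noteq> j"
  have "ys ! min i j \<noteq> ys ! max i j" using w ij m unfolding window_distinct_def by auto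
  then show "take m ys ! i \<noteq> take m ys ! j" using ij by (auto simp: min_def max_def split: if_splits)
qed

lemma window_distinct_mod:
  assumes "k < N"
  shows "window_distinct k (map (\<lambda>T. T mod N + 1) [0..<m])"
  unfolding window_distinct_def
proof (intro allI impI)
  fix i j assume ij: "i < j" "j < length (map (\<lambda>T. T mod N + 1) [0..<m])" "j \<le> i + k"
  have "i mod N \<noteq> j mod N"
  proof
    assume "i mod N = j mod N"
    then have "N dvd j - i" using ij(1) mod_eq_dvd_iff_nat[of i j N] by simp
    moreover have "0 < j - i" "j - i < N" using ij assms by linarith+
    ultimately show False using nat_dvd_not_less by blast
  qed
  then show "map (\<lambda>T. T mod N + 1) [0..<m] ! i \<noteq> map (\<lambda>T. T mod N + 1) [0..<m] ! j" using ij by simp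
qed

fun chunks :: "nat \<Rightarrow> 'a list \<Rightarrow> 'a list list" where
  "chunks k xs = (if xs = [] \<or> k = 0 then [] else take k xs # chunks k (drop k xs))"

declare chunks.simps [simp del]

lemma chunks_Nil [simp]: "chunks k [] = []"
  by (simp add: chunks.simps)

lemma chunks_Cons: "xs \<noteq> [] \<Longrightarrow> 0 < k \<Longrightarrow> chunks k xs = take k xs # chunks k (drop k xs)"
  by (simp add: chunks.simps)

lemma chunks_nth:
  "0 < k \<Longrightarrow> i < length (chunks k xs) \<Longrightarrow> chunks k xs ! i = take k (drop (k * i) xs) \<and> k * i < length xs"
proof (induction k xs arbitrary: i rule: chunks.induct)
  case (1 k xs)
  then have xs: "xs \<noteq> []" by (cases xs) auto
  show ?case
  proof (cases i)
    case 0 then show ?thesis using chunks_Cons[OF xs] 1 xs by simp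
  next
    case (Suc i')
    then have "i' < length (chunks k (drop k xs))" using 1(3) chunks_Cons[OF xs] 1(2) by simp
    then have "chunks k (drop k xs) ! i' = take k (drop (k * i') (drop k xs)) \<and> k * i' < length (drop k xs)"
      using 1(1) xs 1(2) by simp
    then show ?thesis using chunks_Cons[OF xs] 1(2) Suc by (simp add: add.commute; arith)
  qed
qed

lemma chop_by_chunks:
  "0 < k \<Longrightarrow> length ys = length xs \<Longrightarrow> chop_by (map length (chunks k xs)) ys = chunks k ys"
proof (induction k xs arbitrary: ys rule: chunks.induct)
  case (1 k xs)
  show ?case
  proof (cases "xs = []")
    case False
    then have ys: "ys \<noteq> []" using 1 by auto
    have "chop_by (map length (chunks k xs)) ys
        = take k ys # chop_by (map length (chunks k (drop k xs))) (drop k ys)"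
      using chunks_Cons[OF False] 1(2,3) by (simp add: min_def)
    also have "chop_by (map length (chunks k (drop k xs))) (drop k ys) = chunks k (drop k ys)"
      using 1 False by simp
    finally show ?thesis using chunks_Cons[OF ys] 1(2) by simp
  qed (use 1 in simp)
qed

lemma split_phases_chunks:
  "0 < k \<Longrightarrow> 0 < length cur \<Longrightarrow> length cur \<le> k \<Longrightarrow> window_distinct k (cur @ xs)
   \<Longrightarrow> split_phases k cur xs = chunks k (cur @ xs)"
proof (induction xs arbitrary: cur)
  case Nil
  then show ?case using chunks_Cons[of cur k] Nil.prems(1) by simp
next
  case (Cons x xs)
  have "take (Suc (length cur)) (cur @ x # xs) = cur @ [x]" by simp
  then have "distinct (cur @ [x])"
    using window_distinct_take[OF Cons.prems(4), of "Suc (length cur)"] Cons.prems(3) by simp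
  then have card: "card (set (x # cur)) = Suc (length cur)" by (simp add: distinct_card)
  show ?case
  proof (cases "length cur < k")
    case True
    then show ?thesis using Cons.IH[of "cur @ [x]"] Cons.prems card by simp
  next
    case False
    then have "length cur = k" using Cons.prems by simp
    moreover have "window_distinct k ([x] @ xs)"
      using window_distinct_drop[OF Cons.prems(4), of k] \<open>length cur = k\<close> by simp
    ultimately show ?thesis
      using Cons.IH[of "[x]"] Cons.prems card chunks_Cons[of "cur @ x # xs" k] by simp
  qed
qed

lemma k_phases_chunks: "0 < k \<Longrightarrow> window_distinct k I \<Longrightarrow> k_phases k I = chunks k I"
  unfolding k_phases_def by (cases I) (simp_all add: split_phases_chunks[of k "[_]", simplified])

lemma length_far_run: "length (far_run k N s I) = length I"
  by (induction I arbitrary: s) (auto split: prod.split)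

lemma phase_faults_chunks:
  assumes "0 < k" "window_distinct k I"
  shows "phase_faults k N I = map (\<lambda>c. length (filter id c)) (chunks k (far_faults k N I))"
  unfolding phase_faults_def k_phases_chunks[OF assms]
  using chop_by_chunks[OF assms(1), of "far_faults k N I" I] length_far_run
  by (simp add: far_faults_def)

lemma chunks_map: "chunks k (map f xs) = map (map f) (chunks k xs)"
proof (induction k xs rule: chunks.induct)
  case (1 k xs)
  then show ?case by (subst (1 2) chunks.simps) (simp add: take_map drop_map)
qed

section \<open>The phases of FAR on the periodic sequence\<close>

text \<open>The cache size is \<open>k = N - r\<close>, and \<open>x_lower\<close>, \<open>x_upper\<close> say \<open>x = \<lfloor>log\<^sub>2 (N/r)\<rfloor>\<close>.\<close>

locale far_cycle =
  fixes N r x :: nat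
  assumes r_pos: "1 \<le> r" and two_r_less: "2 * r < N"
    and x_lower: "r * 2 ^ x \<le> N" and x_upper: "N < r * 2 ^ Suc x"
begin

abbreviation k :: nat where "k \<equiv> N - r"
abbreviation level :: "nat \<Rightarrow> nat" where "level i \<equiv> N - halving N i"
abbreviation H :: "nat \<Rightarrow> nat set" where "H j \<equiv> holes N r j"
abbreviation F :: "nat \<Rightarrow> nat" where "F j \<equiv> faults_before N r j"

lemma N_pos: "0 < N" using two_r_less by linarith

lemma x_pos: "1 \<le> x"
  using x_upper two_r_less by (cases x) auto

lemma two_r_le_halving: "i < x \<Longrightarrow> 2 * r \<le> halving N i"
proof -
  assume i: "i < x"
  have "(2::nat) ^ Suc i \<le> 2 ^ x" using i by (intro power_increasing) simp_all
  then have "(2 * r) * 2 ^ i \<le> r * 2 ^ x" by simp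
  also have "\<dots> \<le> halving N i * 2 ^ i" using x_lower halving_bounds[OF N_pos, of i] by linarith
  finally show ?thesis by simp
qed

lemma halving_last_bounds: "r \<le> halving N x \<and> halving N x \<le> 2 * r"
proof
  have "r * 2 ^ x \<le> halving N x * 2 ^ x" using x_lower halving_bounds[OF N_pos, of x] by linarith
  then show "r \<le> halving N x" by simp
  have "r * 2 ^ Suc x = (2 * r) * 2 ^ x" by simp
  then have "(halving N x - 1) * 2 ^ x < (2 * r) * 2 ^ x"
    using x_upper halving_bounds[OF N_pos, of x] by linarith
  then show "halving N x \<le> 2 * r" by simp
qed

lemma level_gap: "i < x \<Longrightarrow> level i + r \<le> level (Suc i)"
  using two_r_le_halving[of i] halving_le[of N i] by simp

lemma holes_within_level:
  assumes i: "i < x" and start: "H (level i) = {level i..<level i + r}" and "t \<le> r"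
  shows "H (level i + t) = {level i + t..<level i + r} \<union> {level (Suc i)..<level (Suc i) + t}
     \<and> F (level i + t) = F (level i) + t"
  using \<open>t \<le> r\<close>
proof (induction t)
  case 0 then show ?case using start by simp
next
  case (Suc t)
  define D where "D = halving N i"
  define D' where "D' = halving N (Suc i)"
  have D: "2 * r \<le> D" "D \<le> N" "D' = (D + 1) div 2"
    using two_r_le_halving[OF i] halving_le[of N i] by (simp_all add: D_def D'_def)
  let ?j = "level i + t" and ?v = "level (Suc i) + t"
  have t: "t < r" using Suc by simp
  have Hj: "H ?j = {?j..<level i + r} \<union> {level (Suc i)..<level (Suc i) + t}"
    and Fj: "F ?j = F (level i) + t" using Suc by auto
  have "is_victim N ?j (H ?j) ?v"
    unfolding is_victim_def
  proof (intro conjI ballI)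
    show "?v \<in> evictable N ?j (H ?j)"
      unfolding evictable_def Hj using D t D_def D'_def by auto
    fix u assume "u \<in> evictable N ?j (H ?j)"
    then have "N - D + r \<le> u" "u < N" "u < N - D' \<or> N - D' + t \<le> u"
      unfolding evictable_def Hj D_def D'_def by auto
    from midpoint_is_farthest[OF D(1,2) t D(3) this]
    show "mark_dist N ?j u < mark_dist N ?j ?v \<or> (mark_dist N ?j u = mark_dist N ?j ?v \<and> ?v \<le> u)"
      using D(2) by (simp add: D_def D'_def add.commute)
  qed
  then have v: "victim N ?j (H ?j) = ?v" by (rule victim_eq)
  have j: "?j \<in> H ?j" using Hj t by simp
  have "H (Suc ?j) = insert ?v (H ?j - {?j})" using j v by simp
  also have "\<dots> = {Suc ?j..<level i + r} \<union> {level (Suc i)..<level (Suc i) + Suc t}"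
    unfolding Hj using level_gap[OF i] t by auto
  finally show ?case using Fj j by simp
qed

lemma holes_between_levels:
  assumes "H (level i + r) = {level (Suc i)..<level (Suc i) + r}" and "level i + r + g \<le> level (Suc i)"
  shows "H (level i + r + g) = H (level i + r) \<and> F (level i + r + g) = F (level i + r)"
  using assms(2) by (induction g) (use assms(1) in auto)

lemma holes_at_level: "i \<le> x \<Longrightarrow> H (level i) = {level i..<level i + r} \<and> F (level i) = i * r"
proof (induction i)
  case 0 then show ?case by auto
next
  case (Suc i)
  then have i: "i < x" and IH: "H (level i) = {level i..<level i + r}" "F (level i) = i * r" by auto
  have s: "H (level i + r) = {level (Suc i)..<level (Suc i) + r}" "F (level i + r) = i * r + r"
    using holes_within_level[OF i IH(1), of r] IH(2) by auto
  obtain g where g: "level (Suc i) = level i + r + g" using level_gap[OF i] le_Suc_ex by blast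
  show ?case using holes_between_levels[OF s(1), of g] s g by simp
qed

lemma holes_after_last_level:
  "level x + t \<le> k \<Longrightarrow> {level x + t..<k} \<subseteq> H (level x + t) \<and> F (level x + t) = x * r + t"
proof (induction t)
  case 0
  then show ?case using holes_at_level[of x] halving_last_bounds by auto
next
  case (Suc t)
  then have "level x + t \<in> H (level x + t)" by auto
  then show ?case using Suc by auto
qed

lemma faults_per_phase: "F k = r * (x - 1) + halving N x"
proof -
  have a: "level x \<le> k" using halving_last_bounds by (simp add: diff_le_mono2)
  have e: "level x + (k - level x) = k" using a by (rule le_add_diff_inverse)
  have "F k = x * r + (k - level x)"
    using holes_after_last_level[of "k - level x"] a unfolding e by simp
  moreover have "k - level x = halving N x - r" using halving_last_bounds halving_le[of N x] by simp
  moreover obtain y where "x = Suc y" using x_pos by (cases x) auto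
  ultimately show ?thesis using halving_last_bounds by simp
qed

lemma last_request_faults: "k - 1 \<in> H (k - 1)"
proof (cases "level x < k")
  case True
  then have "{level x + (k - 1 - level x)..<k} \<subseteq> H (level x + (k - 1 - level x))"
    using holes_after_last_level[of "k - 1 - level x"] by simp
  then show ?thesis using True by auto
next
  case False
  \<comment> \<open>then \<open>level x = k\<close>, and \<open>k - 1\<close> is the last fault of level \<open>x - 1\<close>\<close>
  then have hx: "halving N x = r" using halving_last_bounds halving_le[of N x] by linarith
  obtain y where y: "x = Suc y" using x_pos by (cases x) auto
  have "2 * r \<le> halving N y" using two_r_le_halving[of y] y by simp
  then have "halving N y = 2 * r" using hx y by simp
  then have "level y + (r - 1) = k - 1" using r_pos two_r_less by simp
  moreover have "level y + (r - 1) \<in> H (level y + (r - 1))"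
    using holes_within_level[of y "r - 1"] holes_at_level[of y] y r_pos by auto
  ultimately show ?thesis by simp
qed

lemma faults_before_less: "m < k \<Longrightarrow> F m < F k"
proof -
  assume "m < k"
  then have "F m \<le> F (k - 1)" by (intro faults_before_mono) simp
  moreover have "F k = F (k - 1) + 1"
    using last_request_faults two_r_less by (cases k) simp_all
  ultimately show ?thesis by simp
qed

text \<open>For \<open>P \<ge> 1\<close>, offset \<open>q\<close> of phase \<open>P\<close> is the page requested at time \<open>k P + q\<close>
(modulo the period \<open>N\<close>).\<close>

definition page :: "nat \<Rightarrow> nat \<Rightarrow> nat" where
  "page P q = (q + k * P) mod N + 1"

lemma page_eq:
  assumes "q < N"
  shows "page P q = (if q + (k * P) mod N < N then q + (k * P) mod N else q + (k * P) mod N - N) + 1"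
proof -
  define c where "c = (k * P) mod N"
  have "c < N" using N_pos by (simp add: c_def)
  then have "(q + c) mod N = (if q + c < N then q + c else q + c - N)"
    using assms by (cases "q + c < N") (simp_all add: le_mod_geq)
  then show ?thesis unfolding page_def c_def by (simp add: mod_add_right_eq)
qed

lemma page_inj: "a < N \<Longrightarrow> b < N \<Longrightarrow> page P a = page P b \<longleftrightarrow> a = b"
  using page_eq[of a P] page_eq[of b P] mod_less_divisor[OF N_pos, of "k * P"]
  by (simp split: if_splits; arith)

lemma inj_on_page: "inj_on (page P) {..<N}"
  by (auto intro: inj_onI simp: page_inj)

lemma page_shift: "r \<le> q \<Longrightarrow> page (Suc P) q = page P (q - r)"
proof -
  assume "r \<le> q"
  have "k * Suc P = k * P + k" by simp
  then have "q + k * Suc P = (q - r + k * P) + N" using \<open>r \<le> q\<close> two_r_less by arith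
  then have "(q + k * Suc P) mod N = (q - r + k * P) mod N" by (metis mod_add_self2)
  then show ?thesis unfolding page_def by simp
qed

lemma cyc_dist_page:
  assumes "q' < q" "q < N"
  shows "cyc_dist N (page P q) (page P q') = min (q - q') (N - (q - q'))"
proof -
  define c where "c = (k * P) mod N"
  have c: "c < N" using N_pos by (simp add: c_def)
  have p: "page P q = (if q + c < N then q + c else q + c - N) + 1"
    "page P q' = (if q' + c < N then q' + c else q' + c - N) + 1"
    using page_eq[of q P] page_eq[of q' P] assms by (simp_all add: c_def)
  consider "q + c < N" | "q' + c < N" "\<not> q + c < N" | "\<not> q' + c < N" using assms by linarith
  then show ?thesis
  proof cases
    case 1
    then show ?thesis using p assms unfolding cyc_dist_def Let_def by simp
  next
    case 2
    then have "page P q \<le> page P q'" using p assms by simp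
    then show ?thesis using 2 p assms c unfolding cyc_dist_def Let_def by (simp add: min.commute)
  next
    case 3
    then show ?thesis using p assms unfolding cyc_dist_def Let_def by simp
  qed
qed

lemma dist_marked_page:
  assumes "j < q" "q < N"
  shows "dist_marked N (page P ` {..j}) (page P q) = mark_dist N j q"
proof -
  let ?S = "(\<lambda>q'. cyc_dist N (page P q) (page P q')) ` {..j}"
  have fin: "finite ?S" and ne: "?S \<noteq> {}" by auto
  have d: "\<And>q'. q' \<le> j \<Longrightarrow> cyc_dist N (page P q) (page P q') = min (q - q') (N - (q - q'))"
    using cyc_dist_page assms by simp
  have "Min ?S \<le> cyc_dist N (page P q) (page P j)" "Min ?S \<le> cyc_dist N (page P q) (page P 0)"
    using fin by (auto intro: Min_le)
  then have "Min ?S \<le> mark_dist N j q"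
    using d[of j] d[of 0] assms by (auto simp: mark_dist_def min_def split: if_splits)
  moreover have "\<forall>y \<in> ?S. mark_dist N j q \<le> y" using d assms by (auto simp: mark_dist_def min_def)
  then have "mark_dist N j q \<le> Min ?S" using Min_in[OF fin ne] by blast
  ultimately show ?thesis unfolding dist_marked_def image_image by simp
qed

text \<open>Cached offsets below \<open>j\<close> were requested in the current phase, the others one period
earlier. At \<open>j = 0\<close> all cached pages are still marked from the previous phase.\<close>

definition phase_ages :: "nat \<Rightarrow> nat \<Rightarrow> (nat \<Rightarrow> nat) \<Rightarrow> bool" where
  "phase_ages P j L \<longleftrightarrow> (\<forall>q < N. q \<notin> H j \<longrightarrow>
     (q < j \<longrightarrow> L (page P q) = k * P + q) \<and> (j \<le> q \<longrightarrow> L (page P q) + N = k * P + q))"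

definition phase_state :: "nat \<Rightarrow> nat \<Rightarrow> far_state \<Rightarrow> bool" where
  "phase_state P j s \<longleftrightarrow> (case s of (C, M, L, t) \<Rightarrow>
     t = k * P + j \<and> C = page P ` ({..<N} - H j)
     \<and> M = (if j = 0 then C else page P ` {..<j}) \<and> phase_ages P j L)"

lemma holes_in_phase: "j \<le> k \<Longrightarrow> H j \<subseteq> {j..<N} \<and> finite (H j) \<and> card (H j) = r"
  using holes_invariant[of r N j] two_r_less by simp

lemma holes_end: "H k = {k..<N}"
proof -
  have "H k \<subseteq> {k..<N}" "finite (H k)" "card (H k) = card {k..<N}"
    using holes_in_phase[of k] two_r_less by auto
  then show ?thesis by (metis card_subset_eq finite_atLeastLessThan)
qed

lemma card_cache: "j \<le> k \<Longrightarrow> card (page P ` ({..<N} - H j)) = k"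
proof -
  assume "j \<le> k"
  have "card (page P ` ({..<N} - H j)) = card ({..<N} - H j)"
    by (rule card_image) (rule inj_on_subset[OF inj_on_page], auto)
  also have "\<dots> = k" using holes_in_phase[OF \<open>j \<le> k\<close>] by (subst card_Diff_subset) auto
  finally show ?thesis .
qed

lemma evictable_in_phase: "j < k \<Longrightarrow> j \<in> H j \<Longrightarrow> evictable N j (H j) \<noteq> {}"
  using holes_in_phase[of j] by (intro evictable_nonempty) auto

lemma phase_ages_step:
  assumes "phase_ages P j L" "j < N" "\<And>q. q \<notin> H (Suc j) \<Longrightarrow> q \<noteq> j \<Longrightarrow> q \<notin> H j"
  shows "phase_ages P (Suc j) (L(page P j := k * P + j))"
  unfolding phase_ages_def
proof (intro allI impI)
  fix q assume q: "q < N" "q \<notin> H (Suc j)"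
  show "(q < Suc j \<longrightarrow> (L(page P j := k * P + j)) (page P q) = k * P + q)
      \<and> (Suc j \<le> q \<longrightarrow> (L(page P j := k * P + j)) (page P q) + N = k * P + q)"
  proof (cases "q = j")
    case False
    then have "q \<notin> H j" using assms(3) q(2) by blast
    have "page P q \<noteq> page P j" using page_inj[of q j P] q(1) assms(2) False by simp
    moreover have "(q < j \<longrightarrow> L (page P q) = k * P + q) \<and> (j \<le> q \<longrightarrow> L (page P q) + N = k * P + q)"
      using assms(1) q(1) \<open>q \<notin> H j\<close> unfolding phase_ages_def by blast
    ultimately show ?thesis using False by simp
  qed simp
qed

lemma far_victim_page:
  assumes s: "phase_state P j (C, M, L, t)" and "j < k" "j \<in> H j"
  shows "far_victim N C (page P ` {..j}) L = page P (victim N j (H j))"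
proof (rule far_victim_eq[OF is_victim_victim[OF evictable_in_phase[OF assms(2,3)]]])
  have C: "C = page P ` ({..<N} - H j)" using s by (simp add: phase_state_def)
  have "C - page P ` {..j} = page P ` (({..<N} - H j) - {..j})"
    unfolding C by (rule inj_on_image_set_diff[OF inj_on_page, symmetric]) (use \<open>j < k\<close> in auto)
  also have "({..<N} - H j) - {..j} = evictable N j (H j)" unfolding evictable_def by auto
  finally show "C - page P ` {..j} = page P ` evictable N j (H j)" .
next
  fix q assume "q \<in> evictable N j (H j)"
  then show "dist_marked N (page P ` {..j}) (page P q) = mark_dist N j q"
    by (intro dist_marked_page) (auto simp: evictable_def)
next
  fix q q' assume "q \<in> evictable N j (H j)" "q' \<in> evictable N j (H j)"
  moreover have "phase_ages P j L" using s by (simp add: phase_state_def)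
  ultimately have "L (page P q) + N = k * P + q" "L (page P q') + N = k * P + q'"
    unfolding phase_ages_def evictable_def by auto
  then show "L (page P q) \<le> L (page P q') \<longleftrightarrow> q \<le> q'" by linarith
qed

lemma phase_step_hit:
  assumes s: "phase_state P j (C, M, L, t)" and "j < k" "j \<notin> H j"
  shows "far_step k N (C, M, L, t) (page P j) = ((C, insert (page P j) M, L(page P j := t), Suc t), False)"
    and "phase_state P (Suc j) (C, insert (page P j) M, L(page P j := t), Suc t)"
proof -
  have C: "C = page P ` ({..<N} - H j)" and t: "t = k * P + j" and ages: "phase_ages P j L"
    and M: "M = (if j = 0 then C else page P ` {..<j})"
    using s by (simp_all add: phase_state_def)
  have "page P j \<in> C" unfolding C using assms(2,3) by auto
  then show "far_step k N (C, M, L, t) (page P j) = ((C, insert (page P j) M, L(page P j := t), Suc t), False)"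
    by (simp add: far_step_def)
  have H: "H (Suc j) = H j" using assms(3) by simp
  moreover have "j \<noteq> 0" using assms(3) r_pos by (cases j) auto
  moreover have "phase_ages P (Suc j) (L(page P j := t))"
    unfolding t using phase_ages_step[OF ages] assms(2) H by simp
  ultimately show "phase_state P (Suc j) (C, insert (page P j) M, L(page P j := t), Suc t)"
    using C M t by (simp add: phase_state_def lessThan_Suc)
qed

lemma marks_after_fault:
  assumes s: "phase_state P j (C, M, L, t)" and "j < k"
  shows "insert (page P j) (if C \<subseteq> M then {} else M) = page P ` {..j}"
proof (cases "j = 0")
  case False
  have M: "M = page P ` {..<j}" and "card C = k"
    using s False card_cache assms(2) by (simp_all add: phase_state_def)
  moreover have "card (page P ` {..<j}) \<le> j" using card_image_le[of "{..<j}" "page P"] by simp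
  ultimately have "\<not> C \<subseteq> M" using assms(2) card_mono[of M C] by auto
  then show ?thesis using M by (simp add: lessThan_Suc_atMost[symmetric] lessThan_Suc)
qed (use s in \<open>auto simp: phase_state_def\<close>)

lemma phase_step_fault:
  assumes s: "phase_state P j (C, M, L, t)" and "j < k" "j \<in> H j"
  defines "w \<equiv> victim N j (H j)"
  shows "far_step k N (C, M, L, t) (page P j)
      = ((insert (page P j) (C - {page P w}), page P ` {..j}, L(page P j := t), Suc t), True)"
    and "phase_state P (Suc j) (insert (page P j) (C - {page P w}), page P ` {..j}, L(page P j := t), Suc t)"
proof -
  have C: "C = page P ` ({..<N} - H j)" and t: "t = k * P + j" and ages: "phase_ages P j L"
    using s by (simp_all add: phase_state_def)
  have "page P j \<notin> C" unfolding C using assms(2,3) page_inj by auto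
  moreover have "card C = k" using C card_cache assms(2) by simp
  moreover have "insert (page P j) (if C \<subseteq> M then {} else M) = page P ` {..j}"
    using marks_after_fault[OF s assms(2)] .
  moreover have "far_victim N C (page P ` {..j}) L = page P w"
    unfolding w_def using far_victim_page[OF assms(1-3)] .
  ultimately show "far_step k N (C, M, L, t) (page P j)
      = ((insert (page P j) (C - {page P w}), page P ` {..j}, L(page P j := t), Suc t), True)"
    by (simp add: far_step_def Let_def)
  have "w \<in> evictable N j (H j)"
    using is_victim_victim[OF evictable_in_phase[OF assms(2,3)]] unfolding w_def is_victim_def by blast
  then have w: "j < w" "w < N" "w \<notin> H j" by (auto simp: evictable_def)
  have H: "H (Suc j) = insert w (H j - {j})" using assms(3) by (simp add: w_def)
  have "{..<N} - H (Suc j) = insert j (({..<N} - H j) - {w})" using H w assms(2,3) by auto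
  then have "page P ` ({..<N} - H (Suc j)) = insert (page P j) (C - {page P w})"
    unfolding C using inj_on_image_set_diff[OF inj_on_page, of "{..<N} - H j" "{w}" P] w by auto
  moreover have "phase_ages P (Suc j) (L(page P j := t))"
    unfolding t using phase_ages_step[OF ages] assms(2) H by auto
  ultimately show "phase_state P (Suc j)
      (insert (page P j) (C - {page P w}), page P ` {..j}, L(page P j := t), Suc t)"
    using t by (simp add: phase_state_def lessThan_Suc_atMost)
qed

lemma phase_step:
  assumes "phase_state P j s" "j < k"
  shows "snd (far_step k N s (page P j)) = (j \<in> H j) \<and> phase_state P (Suc j) (fst (far_step k N s (page P j)))"
  using assms phase_step_hit[of P j] phase_step_fault[of P j] by (cases s) (cases "j \<in> H j"; simp)

definition request :: "nat \<Rightarrow> nat" where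
  "request T = T mod N + 1"

definition filling_state :: "nat \<Rightarrow> far_state \<Rightarrow> bool" where
  "filling_state T s \<longleftrightarrow> (case s of (C, M, L, t) \<Rightarrow>
     t = T \<and> C = {1..T} \<and> M = C \<and> (\<forall>p \<in> {1..T}. L p = p - 1))"

definition state_at :: "nat \<Rightarrow> far_state \<Rightarrow> bool" where
  "state_at T s \<longleftrightarrow> (if T < k then filling_state T s else phase_state (T div k) (T mod k) s)"

definition fault_at :: "nat \<Rightarrow> bool" where
  "fault_at T \<longleftrightarrow> T < k \<or> T mod k \<in> H (T mod k)"

lemma k_pos: "0 < k" using two_r_less by simp

lemma div_mod_phase: "j < k \<Longrightarrow> (k * P + j) div k = P \<and> (k * P + j) mod k = j"
  using k_pos by simp

lemma request_phase: "j < k \<Longrightarrow> request (k * P + j) = page P j"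
  unfolding request_def page_def by (simp add: add.commute)

lemma phase_time_ge: "1 \<le> P \<Longrightarrow> k \<le> k * P + j"
proof -
  assume "1 \<le> P"
  then have "k * 1 \<le> k * P" by (rule mult_le_mono2)
  then show ?thesis by linarith
qed

lemma state_at_phase: "1 \<le> P \<Longrightarrow> j < k \<Longrightarrow> state_at (k * P + j) s \<longleftrightarrow> phase_state P j s"
  using div_mod_phase[of j P] phase_time_ge[of P j] unfolding state_at_def by simp

lemma fault_at_phase: "1 \<le> P \<Longrightarrow> j < k \<Longrightarrow> fault_at (k * P + j) \<longleftrightarrow> j \<in> H j"
  using div_mod_phase[of j P] phase_time_ge[of P j] unfolding fault_at_def by simp

lemma filling_step:
  assumes "filling_state T s" "T < k"
  shows "snd (far_step k N s (request T)) \<and> filling_state (Suc T) (fst (far_step k N s (request T)))"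
proof -
  obtain C M L t where s: "s = (C, M, L, t)" by (cases s) auto
  have st: "t = T" "C = {1..T}" "M = C" "\<forall>p \<in> {1..T}. L p = p - 1"
    using assms(1) by (simp_all add: filling_state_def s)
  have "request T = Suc T" using assms(2) by (simp add: request_def)
  then have "far_step k N s (request T) = ((insert (Suc T) C, insert (Suc T) M, L(Suc T := t), Suc t), True)"
    using st assms(2) by (simp add: far_step_def s)
  then show ?thesis using st by (auto simp: filling_state_def)
qed

lemma filling_to_phase: "filling_state k s \<Longrightarrow> phase_state 1 0 s"
proof -
  assume "filling_state k s"
  then obtain L where s: "s = ({1..k}, {1..k}, L, k)" and L: "\<And>p. p \<in> {1..k} \<Longrightarrow> L p = p - 1"
    by (cases s) (auto simp: filling_state_def)
  have page1: "page 1 q = q - r + 1" if "r \<le> q" "q < N" for q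
    using that page_eq[of q 1] two_r_less r_pos by auto
  have "page 1 ` ({..<N} - H 0) = {1..k}"
  proof
    show "page 1 ` ({..<N} - H 0) \<subseteq> {1..k}" using page1 by auto
    show "{1..k} \<subseteq> page 1 ` ({..<N} - H 0)"
    proof
      fix p assume p: "p \<in> {1..k}"
      then have "p = page 1 (p - 1 + r)" "p - 1 + r \<in> {..<N} - H 0" using page1[of "p - 1 + r"] by auto
      then show "p \<in> page 1 ` ({..<N} - H 0)" by blast
    qed
  qed
  moreover have "phase_ages 1 0 L"
    unfolding phase_ages_def using page1 L by auto
  ultimately show ?thesis unfolding s phase_state_def by simp
qed

lemma phase_to_next: "phase_state P k s \<Longrightarrow> phase_state (Suc P) 0 s"
proof -
  assume "phase_state P k s"
  moreover have "{..<N} - H k = {..<k}" using holes_end by auto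
  ultimately obtain L where s: "s = (page P ` {..<k}, page P ` {..<k}, L, k * P + k)"
    and ages: "phase_ages P k L"
    using k_pos by (cases s) (auto simp: phase_state_def)
  have "page (Suc P) ` ({..<N} - H 0) = page P ` {..<k}"
  proof
    show "page (Suc P) ` ({..<N} - H 0) \<subseteq> page P ` {..<k}" using page_shift by auto
    show "page P ` {..<k} \<subseteq> page (Suc P) ` ({..<N} - H 0)"
    proof
      fix p assume "p \<in> page P ` {..<k}"
      then obtain q where q: "q < k" "p = page P q" by auto
      then have "p = page (Suc P) (q + r)" "q + r \<in> {..<N} - H 0" using page_shift[of "q + r" P] by auto
      then show "p \<in> page (Suc P) ` ({..<N} - H 0)" by blast
    qed
  qed
  moreover have "phase_ages (Suc P) 0 L"
    unfolding phase_ages_def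
  proof (intro allI impI conjI)
    fix q assume q: "q < N" "q \<notin> H 0" "0 \<le> q"
    then have "L (page P (q - r)) = k * P + (q - r)"
      using ages holes_end unfolding phase_ages_def by auto
    then show "L (page (Suc P) q) + N = k * Suc P + q" using q page_shift two_r_less by simp
  qed simp
  ultimately show ?thesis unfolding s phase_state_def by simp
qed

lemma state_at_step:
  assumes "state_at T s"
  shows "snd (far_step k N s (request T)) = fault_at T \<and> state_at (Suc T) (fst (far_step k N s (request T)))"
proof (cases "T < k")
  case True
  then have "filling_state T s" using assms by (simp add: state_at_def)
  from filling_step[OF this True] have step:
    "snd (far_step k N s (request T))" "filling_state (Suc T) (fst (far_step k N s (request T)))"
    by simp_all
  moreover have "state_at (Suc T) (fst (far_step k N s (request T)))"
  proof (cases "Suc T < k")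
    case False
    then have "Suc T = k * 1 + 0" using True by simp
    then show ?thesis using step filling_to_phase state_at_phase[of 1 0] k_pos by simp
  qed (use step in \<open>simp add: state_at_def\<close>)
  ultimately show ?thesis using True by (simp add: fault_at_def)
next
  case False
  define P j where "P = T div k" and "j = T mod k"
  have T: "T = k * P + j" and j: "j < k" and P: "1 \<le> P"
    using False k_pos div_le_mono[of k T k] by (simp_all add: P_def j_def)
  have "phase_state P j s" using assms state_at_phase[OF P j] T by simp
  from phase_step[OF this j] have step:
    "snd (far_step k N s (request T)) = fault_at T" "phase_state P (Suc j) (fst (far_step k N s (request T)))"
    using request_phase[OF j] fault_at_phase[OF P j] T by simp_all
  show ?thesis
  proof (cases "Suc j < k")
    case True
    then show ?thesis using step state_at_phase[OF P True] T by simp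
  next
    case False
    then have "Suc j = k" using j by simp
    then have "phase_state (Suc P) 0 (fst (far_step k N s (request T)))"
      using step(2) phase_to_next by simp
    moreover have "Suc T = k * Suc P + 0" using T \<open>Suc j = k\<close> by simp
    ultimately show ?thesis using step(1) state_at_phase[of "Suc P" 0] k_pos by simp
  qed
qed

lemma state_at_0: "state_at 0 far_init"
  using k_pos by (simp add: state_at_def filling_state_def far_init_def)

lemma far_run_requests: "state_at T s \<Longrightarrow> far_run k N s (map request [T..<T + d]) = map fault_at [T..<T + d]"
proof (induction d arbitrary: T s)
  case (Suc d)
  obtain s' f where sf: "far_step k N s (request T) = (s', f)" by fastforce
  have "f = fault_at T" "state_at (Suc T) s'" using state_at_step[OF Suc.prems] sf by auto
  moreover from Suc.IH[OF this(2)]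
  have "far_run k N s' (map request [Suc T..<Suc T + d]) = map fault_at [Suc T..<Suc T + d]" .
  moreover have "[T..<T + Suc d] = T # [Suc T..<Suc T + d]" by (simp add: upt_conv_Cons del: upt_Suc)
  ultimately show ?case using sf by (simp del: upt_Suc)
qed simp

lemma faults_in_phase: "1 \<le> P \<Longrightarrow> j \<le> k \<Longrightarrow> length (filter id (map fault_at [k * P..<k * P + j])) = F j"
  by (induction j) (simp_all add: fault_at_phase)

lemma faults_full_phases: "length (filter id (map fault_at [0..<k * Suc Q])) = k + Q * F k"
proof (induction Q)
  case 0
  have "filter id (map fault_at [0..<k]) = map fault_at [0..<k]"
    by (rule filter_True) (auto simp: fault_at_def)
  then have "length (filter id (map fault_at [0..<k])) = k" by (simp only: length_map length_upt diff_zero)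
  then show ?case by (simp add: comp_def)
next
  case (Suc Q)
  have "[0..<k * Suc (Suc Q)] = [0..<k * Suc Q + k]" by (simp only: mult_Suc_right add.commute)
  also have "\<dots> = [0..<k * Suc Q] @ [k * Suc Q..<k * Suc Q + k]" by (rule upt_add_eq_append) simp
  finally show ?case using Suc faults_in_phase[of "Suc Q" k] by (simp add: comp_def)
qed

lemma far_faults_requests: "far_faults k N (map request [0..<M]) = map fault_at [0..<M]"
  using far_run_requests[OF state_at_0, of M] by (simp add: far_faults_def)

lemma FAR_requests:
  assumes "m \<le> k"
  shows "FAR k N (map request [0..<k * Suc Q + m]) = k + Q * F k + F m"
proof -
  have "[0..<k * Suc Q + m] = [0..<k * Suc Q] @ [k * Suc Q..<k * Suc Q + m]"
    by (rule upt_add_eq_append) simp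
  then have "FAR k N (map request [0..<k * Suc Q + m])
      = length (filter id (map fault_at [0..<k * Suc Q]))
        + length (filter id (map fault_at [k * Suc Q..<k * Suc Q + m]))"
    unfolding FAR_def far_faults_requests by simp
  then show ?thesis using faults_full_phases[of Q] faults_in_phase[of "Suc Q" m] assms by simp
qed

lemma phase_faults_requests:
  assumes "0 < i" "i + 1 < length (k_phases k (map request [0..<M]))"
  shows "phase_faults k N (map request [0..<M]) ! i = F k"
proof -
  let ?I = "map request [0..<M]"
  have w: "window_distinct k ?I"
    using window_distinct_mod[of k N M] two_r_less r_pos unfolding request_def by simp
  have faults: "phase_faults k N ?I = map (\<lambda>c. length (filter id (map fault_at c))) (chunks k [0..<M])"
    using phase_faults_chunks[OF k_pos w] by (simp add: far_faults_requests chunks_map)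
  have len: "Suc i < length (chunks k [0..<M])"
    using assms(2) k_phases_chunks[OF k_pos w] by (simp add: chunks_map)
  then have i: "i < length (chunks k [0..<M])" by simp
  have "chunks k [0..<M] ! i = [k * i..<k * i + k]"
    using chunks_nth[OF k_pos i] chunks_nth[OF k_pos len] by simp
  then show ?thesis using faults len faults_in_phase[of i k] assms(1) by simp
qed

end

theorem lemma13:
  fixes k r n :: nat
  assumes "k \<ge> 2" and "1 \<le> r" and "r \<le> k - 1" and "n \<ge> 1"
  defines "N \<equiv> k + r"
  defines "x \<equiv> nat \<lfloor>log 2 (real N / real r)\<rfloor>"
  defines "X \<equiv> r * (x - 1) + nat \<lceil>real N / 2 ^ x\<rceil>"
  defines "I \<equiv> concat (replicate n [1..<N + 1])"
  shows "(\<forall>i. 0 < i \<and> i + 1 < length (k_phases k I) \<longrightarrow> phase_faults k N I ! i = X)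
       \<and> int (nat \<lfloor>real (n * N) / real k\<rfloor> * X) + int k - int X \<le> int (FAR k N I)
       \<and> int (FAR k N I) \<le> int (nat \<lfloor>real (n * N) / real k\<rfloor> * X) + int k - 1"
proof -
  have r2: "2 * r < N" using assms(1,3) unfolding N_def by linarith
  have "r * 2 ^ x \<le> N \<and> N < r * 2 ^ Suc x"
    unfolding x_def using floor_log2_ratio_bounds[of r N] assms(2) r2 by simp
  then interpret cyc: far_cycle N r x using assms(2) r2 by unfold_locales simp_all
  have k: "N - r = k" by (simp add: N_def)
  have X: "X = cyc.F k"
    using cyc.faults_per_phase halving_eq_ceiling[OF cyc.N_pos, of x] unfolding X_def k by simp
  define q m where "q = n * N div k" and "m = n * N mod k"
  have "k \<le> N" "N \<le> n * N" using mult_le_mono1[OF assms(4), of N] by (simp_all add: N_def)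
  then have "k \<le> n * N" by linarith
  then have q: "1 \<le> q" and m: "m < k" and nN: "n * N = k * Suc (q - 1) + m"
    using assms(1) div_le_mono[of k "n * N" k] by (simp_all add: q_def m_def)
  have I: "I = map cyc.request [0..<k * Suc (q - 1) + m]"
    unfolding I_def cyc.request_def using concat_replicate_upt[OF cyc.N_pos] nN by simp
  have FAR: "FAR k N I = k + (q - 1) * X + cyc.F m"
    using cyc.FAR_requests[of m "q - 1"] m unfolding I k X by simp
  have less: "cyc.F m < X" using cyc.faults_before_less[of m] m unfolding k X by simp
  have phases: "\<forall>i. 0 < i \<and> i + 1 < length (k_phases k I) \<longrightarrow> phase_faults k N I ! i = X"
    using cyc.phase_faults_requests unfolding I k X by blast
  have "nat \<lfloor>real (n * N) / real k\<rfloor> = q" by (simp only: q_def floor_divide_of_nat_eq nat_int)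
  moreover have "q * X = (q - 1) * X + X" using q by (cases q) simp_all
  ultimately show ?thesis using phases FAR less by simp
qed

end
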